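(* Let $C$ be the middle-thirds Cantor set. For every $K<\infty$ and $n\in\mathbb{N}$ let \[ S_n^{(K)}:=\{p/q\in C:\ \gcd(p,q)=1,\ 3^{n-1}\le q<3^n,\ P(p/q)\le K\log q\}. \] Then for every $\varepsilon_1>0$ we have $\#(S_n^{(K)})=O\big(2^{n(1+\varepsilon_1)}\big)$ as $n\to\infty$.
   Context: $C=\{x\in[0,1]: x=\sum_{i\ge1}a_i3^{-i}\text{ with all }a_i\in\{0,2\}\}$. For a rational number $p/q$, its period $P(p/q)$ is the (minimal) period of the eventually periodic part of its ternary expansion. $\log$ is the natural logarithm; $p\in\mathbb{Z}$, $q\in\mathbb{N}$. *)

theory Defs
  imports "HOL-Analysis.Analysis" "HOL-Library.Landau_Symbols"
begin

text \<open>Middle-thirds Cantor set: x = sum_{i>=1} a_i 3^{-i} with a_i in {0,2}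
  (here the digit a_{i+1} is indexed by i, starting from 0).\<close>
definition cantor_set :: "real set" where
  "cantor_set = {x. \<exists>a::nat \<Rightarrow> nat. (\<forall>i. a i \<in> {0, 2}) \<and>
                    x = (\<Sum>i. real (a i) / 3 ^ Suc i)}"

text \<open>The (i+1)-th ternary digit of x (standard greedy expansion).\<close>
definition ternary_digit :: "real \<Rightarrow> nat \<Rightarrow> nat" where
  "ternary_digit x i = nat (\<lfloor>3 ^ Suc i * x\<rfloor> mod 3)"

definition ternary_period :: "real \<Rightarrow> nat" where
  "ternary_period x = (LEAST k. k > 0 \<and>
      (\<exists>N. \<forall>i\<ge>N. ternary_digit x (i + k) = ternary_digit x i))"

text \<open>S_n^{(K)}, rationals p/q in lowest terms (represented by the unique pair (p,q)).\<close>
definition S_set :: "real \<Rightarrow> nat \<Rightarrow> (int \<times> nat) set" where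
  "S_set K n = {(p, q). coprime p (int q) \<and> 3 ^ (n - 1) \<le> q \<and> q < 3 ^ n \<and>
                  real_of_int p / real q \<in> cantor_set \<and>
                  real (ternary_period (real_of_int p / real q)) \<le> K * ln (real q)}"

end

theory Submission
  imports Defs "HOL-Computational_Algebra.Primes" "HOL-Real_Asymp.Real_Asymp"
begin

text \<open>If the ternary expansion of a reduced fraction \<open>p/q\<close> has period \<open>P\<close>, then
  \<open>q\<close> divides \<open>3^N (3^P - 1)\<close>, so \<open>q = 3^a d\<close> with \<open>a < n\<close> and \<open>d\<close> a divisor of
  \<open>3^P - 1\<close>. On \<open>S_n^(K)\<close> the period is at most \<open>L = \<lceil>|K| n ln 3\<rceil>\<close>, so by the divisor
  bound \<open>d(m) = O(m^\<delta>)\<close> there are at most \<open>n L O(3^(L\<delta>))\<close> possible denominators.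
  For a fixed denominator \<open>q < 3^n\<close>, two fractions \<open>p/q\<close> in the Cantor set with the same
  first \<open>n\<close> Cantor digits are less than \<open>1/q\<close> apart, so there are at most \<open>2^n\<close>
  numerators. Taking \<open>\<delta>\<close> small makes \<open>3^(L\<delta>) \<le> 2^(\<epsilon>(n+1)/2)\<close>.\<close>

lemma card_divisors_le_prod_Suc_multiplicity:
  fixes m :: nat
  assumes "m > 0"
  shows "card {d. d dvd m} \<le> (\<Prod>p\<in>prime_factors m. Suc (multiplicity p m))"
proof -
  let ?exps = "\<lambda>d. restrict (\<lambda>p. multiplicity p d) (prime_factors m)"
  let ?box = "PiE (prime_factors m) (\<lambda>p. {0..multiplicity p m})"
  have "inj_on ?exps {d. d dvd m}"
  proof (rule inj_onI)
    fix d1 d2 assume d1: "d1 \<in> {d. d dvd m}" and d2: "d2 \<in> {d. d dvd m}" and eq: "?exps d1 = ?exps d2"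
    have "multiplicity p d1 = multiplicity p d2" if "prime p" for p
    proof (cases "p \<in> prime_factors m")
      case True
      then show ?thesis using fun_cong[OF eq, of p] by simp
    next
      case False
      then have "\<not> p dvd d1" "\<not> p dvd d2"
        using assms that d1 d2 dvd_trans by (auto simp: in_prime_factors_iff)
      then show ?thesis by (simp add: not_dvd_imp_multiplicity_0)
    qed
    moreover have "d1 \<noteq> 0" "d2 \<noteq> 0" using d1 d2 assms by auto
    ultimately show "d1 = d2" using multiplicity_eq_imp_eq[of d1 d2] by simp
  qed
  moreover have "?exps ` {d. d dvd m} \<subseteq> ?box"
    using dvd_imp_multiplicity_le[of _ m] assms by (auto simp: PiE_def)
  ultimately have "card {d. d dvd m} \<le> card ?box"
    by (intro card_inj_on_le) (auto intro: finite_PiE)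
  also have "\<dots> = (\<Prod>p\<in>prime_factors m. Suc (multiplicity p m))"
    by (subst card_PiE) auto
  finally show ?thesis .
qed

lemma Suc_le_power_if_two_le:
  fixes b :: real
  assumes "2 \<le> b"
  shows "real (Suc e) \<le> b ^ e"
proof (induction e)
  case (Suc e)
  have "real (Suc (Suc e)) \<le> 2 * real (Suc e)" by simp
  also have "\<dots> \<le> b * b ^ e" using Suc assms by (intro mult_mono) auto
  finally show ?case by simp
qed simp

lemma Suc_le_mult_power:
  fixes b :: real
  assumes "1 < b"
  shows "real (Suc e) \<le> (1 + 1 / ln b) * b ^ e"
proof -
  have lnb: "ln b > 0" using assms by simp
  have "1 + real e * ln b \<le> exp (real e * ln b)" by (rule exp_ge_add_one_self)
  also have "\<dots> = b ^ e" using assms by (simp add: exp_of_nat_mult)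
  finally have "(1 + 1 / ln b) * (1 + real e * ln b) \<le> (1 + 1 / ln b) * b ^ e"
    using lnb by (intro mult_left_mono) auto
  moreover have "real (Suc e) \<le> (1 + 1 / ln b) * (1 + real e * ln b)"
    using lnb by (simp add: field_simps)
  ultimately show ?thesis by linarith
qed

lemma Suc_le_power_powr:
  fixes p e :: nat and \<delta> :: real
  assumes "\<delta> > 0" "p \<ge> 2"
  shows "real (Suc e) \<le> (if real p powr \<delta> < 2 then 1 + 1 / (\<delta> * ln 2) else 1) * (real p ^ e) powr \<delta>"
proof -
  have "(real p ^ e) powr \<delta> = (real p powr \<delta>) ^ e"
    using assms(2) by (simp add: powr_power powr_realpow[symmetric] powr_powr mult.commute)
  moreover have "real (Suc e) \<le> (if real p powr \<delta> < 2 then 1 + 1 / (\<delta> * ln 2) else 1) * (real p powr \<delta>) ^ e"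
  proof (cases "real p powr \<delta> < 2")
    case True
    have "1 < real p powr \<delta>" using assms by simp
    moreover have "ln 2 \<le> ln (real p)" using assms(2) by simp
    then have "1 + 1 / ln (real p powr \<delta>) \<le> 1 + 1 / (\<delta> * ln 2)"
      using assms by (simp add: frac_le)
    ultimately show ?thesis
      using Suc_le_mult_power[of "real p powr \<delta>" e] True by (simp add: order_trans mult_right_mono)
  next
    case False
    then show ?thesis using Suc_le_power_if_two_le by simp
  qed
  ultimately show ?thesis by simp
qed

text \<open>In \<open>d(m) \<le> \<Prod>(e\<^sub>p + 1)\<close> every factor with \<open>p powr \<delta> \<ge> 2\<close> is at most
  \<open>(p ^ e\<^sub>p) powr \<delta>\<close>; the finitely many primes \<open>p < 2 powr (1/\<delta>)\<close> each cost at most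
  a constant factor.\<close>
lemma card_divisors_le_powr:
  fixes \<delta> :: real
  assumes "\<delta> > 0"
  shows "\<exists>C>0. \<forall>m::nat. m > 0 \<longrightarrow> real (card {d. d dvd m}) \<le> C * real m powr \<delta>"
proof -
  define c where "c = 1 + 1 / (\<delta> * ln 2)"
  define B where "B = nat \<lceil>2 powr (1 / \<delta>)\<rceil>"
  define small where "small = (\<lambda>p::nat. real p powr \<delta> < 2)"
  define h where "h = (\<lambda>p. if small p then c else 1)"
  have c1: "c \<ge> 1" using assms by (simp add: c_def)
  have factor_le: "real (Suc e) \<le> h p * (real p ^ e) powr \<delta>" if "p \<ge> 2" for p e :: nat
    unfolding h_def small_def c_def by (rule Suc_le_power_powr[OF assms that])
  have small_lt_B: "p < B" if "small p" for p :: nat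
  proof -
    have "real p = (real p powr \<delta>) powr (1 / \<delta>)" using assms by (simp add: powr_powr)
    also have "\<dots> < 2 powr (1 / \<delta>)"
      using that assms by (intro powr_less_mono2) (auto simp: small_def)
    also have "\<dots> \<le> real B" unfolding B_def by linarith
    finally show ?thesis by simp
  qed
  show ?thesis
  proof (intro exI[of _ "c ^ B"] conjI allI impI)
    show "c ^ B > 0" using c1 by simp
    fix m :: nat assume m: "m > 0"
    let ?P = "prime_factors m"
    have "real (card {d. d dvd m}) \<le> (\<Prod>p\<in>?P. real (Suc (multiplicity p m)))"
      using card_divisors_le_prod_Suc_multiplicity[OF m] by (metis of_nat_le_iff of_nat_prod)
    also have "\<dots> \<le> (\<Prod>p\<in>?P. h p * (real p ^ multiplicity p m) powr \<delta>)"
      using factor_le prime_ge_2_nat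
      by (intro prod_mono) (auto simp: in_prime_factors_iff simp del: of_nat_Suc)
    also have "\<dots> = (\<Prod>p\<in>?P. h p) * (\<Prod>p\<in>?P. real p ^ multiplicity p m) powr \<delta>"
      by (simp add: prod.distrib prod_powr_distrib)
    also have "(\<Prod>p\<in>?P. real p ^ multiplicity p m) = real m"
    proof -
      have "real (\<Prod>p\<in>?P. p ^ multiplicity p m) = real m"
        using prod_prime_factors[of m] m by simp
      then show ?thesis by simp
    qed
    also have "(\<Prod>p\<in>?P. h p) = (\<Prod>p\<in>{p\<in>?P. small p}. c)"
      unfolding h_def by (rule prod.inter_filter[symmetric]) simp
    also have "\<dots> = c ^ card {p\<in>?P. small p}" by simp
    also have "\<dots> \<le> c ^ B"
      using small_lt_B c1 card_mono[of "{..<B}" "{p\<in>?P. small p}"]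
      by (intro power_increasing) (auto simp: subset_eq)
    finally show "real (card {d. d dvd m}) \<le> c ^ B * real m powr \<delta>"
      by (simp add: mult_right_mono)
  qed
qed

lemma three_pow_Suc_mult_eq:
  "3 ^ Suc i * x = 3 * frac (3 ^ i * x) + of_int (3 * \<lfloor>3 ^ i * x\<rfloor>)"
  by (simp add: frac_def algebra_simps)

lemma ternary_digit_eq_floor_frac: "ternary_digit x i = nat \<lfloor>3 * frac (3 ^ i * x)\<rfloor>"
proof -
  have "\<lfloor>3 * frac (3 ^ i * x)\<rfloor> < 3"
    using frac_lt_1[of "3 ^ i * x"] by (simp add: floor_less_iff)
  moreover have "\<lfloor>3 ^ Suc i * x\<rfloor> = \<lfloor>3 * frac (3 ^ i * x)\<rfloor> + 3 * \<lfloor>3 ^ i * x\<rfloor>"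
    unfolding three_pow_Suc_mult_eq by (rule floor_add_int[symmetric])
  ultimately show ?thesis by (simp add: ternary_digit_def)
qed

lemma frac_three_pow_Suc_mult: "frac (3 ^ Suc i * x) = frac (3 * frac (3 ^ i * x))"
  unfolding three_pow_Suc_mult_eq by (rule frac_add_of_int_right)

lemma ternary_digit_eq_diff_frac:
  "real (ternary_digit x i) = 3 * frac (3 ^ i * x) - frac (3 ^ Suc i * x)"
proof -
  have "real (ternary_digit x i) = of_int \<lfloor>3 * frac (3 ^ i * x)\<rfloor>"
    by (simp add: ternary_digit_eq_floor_frac)
  then show ?thesis
    unfolding frac_three_pow_Suc_mult frac_def[of "3 * frac (3 ^ i * x)"] by simp
qed

lemma ternary_digit_shift_if_frac_eq:
  assumes "frac (3 ^ i * x) = frac (3 ^ j * x)"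
  shows "ternary_digit x (i + k) = ternary_digit x (j + k)"
proof -
  have "frac (3 ^ (i + k) * x) = frac (3 ^ (j + k) * x)"
  proof (induction k)
    case (Suc k)
    then show ?case by (simp only: add_Suc_right frac_three_pow_Suc_mult)
  qed (use assms in simp)
  then show ?thesis by (simp add: ternary_digit_eq_floor_frac)
qed

text \<open>If two digit sequences agree, the difference of the corresponding fractional parts
  is multiplied by 3 at each step while staying in \<open>(-1, 1)\<close>, so it vanishes.\<close>
lemma frac_eq_if_ternary_digit_shift:
  assumes "\<And>k. ternary_digit x (i + k) = ternary_digit x (j + k)"
  shows "frac (3 ^ i * x) = frac (3 ^ j * x)"
proof (rule ccontr)
  define D where "D = (\<lambda>k. frac (3 ^ (i + k) * x) - frac (3 ^ (j + k) * x))"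
  have "D (Suc k) = 3 * D k" for k
    using ternary_digit_eq_diff_frac[of x "i + k"] ternary_digit_eq_diff_frac[of x "j + k"]
      assms[of k, THEN arg_cong[of _ _ real]]
    unfolding D_def add_Suc_right by argo
  then have D_pow: "D k = 3 ^ k * D 0" for k by (induction k) simp_all
  have D_bound: "\<bar>D k\<bar> < 1" for k
    using frac_lt_1[of "3 ^ (i + k) * x"] frac_lt_1[of "3 ^ (j + k) * x"]
      frac_ge_0[of "3 ^ (i + k) * x"] frac_ge_0[of "3 ^ (j + k) * x"]
    unfolding D_def by linarith
  assume "frac (3 ^ i * x) \<noteq> frac (3 ^ j * x)"
  then have D0: "\<bar>D 0\<bar> > 0" by (simp add: D_def)
  obtain k where "1 / \<bar>D 0\<bar> < (3::real) ^ k"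
    using real_arch_pow[of 3 "1 / \<bar>D 0\<bar>"] by auto
  then have "1 < 3 ^ k * \<bar>D 0\<bar>" by (simp only: pos_divide_less_eq[OF D0])
  also have "\<dots> = \<bar>D k\<bar>" unfolding D_pow[of k] by (simp add: abs_mult)
  finally have "1 < \<bar>D k\<bar>" .
  with D_bound[of k] show False by simp
qed

lemma frac_of_int_divide: "frac (of_int m / of_int q :: real) = of_int (m mod q) / of_int q"
proof (cases "q = 0")
  case False
  then show ?thesis
    by (simp add: frac_def floor_divide_of_int_eq minus_div_mult_eq_mod[symmetric] field_simps)
qed simp

lemma ternary_digits_eventually_periodic:
  fixes p :: int and q :: nat
  assumes "q > 0"
  shows "\<exists>k>0. \<exists>N. \<forall>i\<ge>N. ternary_digit (of_int p / real q) (i + k) = ternary_digit (of_int p / real q) i"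
proof -
  define x where "x = of_int p / real q"
  define f where "f = (\<lambda>i::nat. frac (3 ^ i * x))"
  have "f i = of_int ((3 ^ i * p) mod int q) / of_int (int q)" for i
    using frac_of_int_divide[of "3 ^ i * p" "int q"] by (simp add: f_def x_def)
  then have "range f \<subseteq> (\<lambda>m. of_int m / of_int (int q)) ` {0..<int q}"
    using assms by auto
  then have "\<not> inj f"
    using finite_imageD[of f UNIV] finite_subset by auto
  then obtain i j where "i < j" "f i = f j"
    unfolding inj_def by (metis linorder_neqE_nat)
  have "ternary_digit x (m + (j - i)) = ternary_digit x m" if "i \<le> m" for m
  proof -
    have "i + (m - i) = m" "j + (m - i) = m + (j - i)" using that \<open>i < j\<close> by auto
    then show ?thesis
      using ternary_digit_shift_if_frac_eq[of i x j "m - i"] \<open>f i = f j\<close> by (simp add: f_def)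
  qed
  with \<open>i < j\<close> show ?thesis unfolding x_def by (intro exI[of _ "j - i"]) auto
qed

lemma ternary_period_spec:
  assumes "\<exists>k>0. \<exists>N. \<forall>i\<ge>N. ternary_digit x (i + k) = ternary_digit x i"
  shows "ternary_period x > 0" and "\<exists>N. frac (3 ^ N * x) = frac (3 ^ (N + ternary_period x) * x)"
proof -
  let ?P = "ternary_period x"
  have "?P > 0 \<and> (\<exists>N. \<forall>i\<ge>N. ternary_digit x (i + ?P) = ternary_digit x i)"
    unfolding ternary_period_def by (rule LeastI_ex) (use assms in blast)
  then obtain N where "?P > 0" and periodic: "\<forall>i\<ge>N. ternary_digit x (i + ?P) = ternary_digit x i"
    by blast
  show "?P > 0" by fact
  have "ternary_digit x (N + k) = ternary_digit x (N + ?P + k)" for k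
    using periodic[rule_format, of "N + k"] by (simp add: ac_simps)
  then show "\<exists>N. frac (3 ^ N * x) = frac (3 ^ (N + ?P) * x)"
    using frac_eq_if_ternary_digit_shift by blast
qed

lemma denominator_dvd_if_frac_mult_eq:
  fixes p :: int and q a b :: nat
  assumes "q > 0" "coprime p (int q)"
    and "frac (real a * (of_int p / real q)) = frac (real b * (of_int p / real q))"
  shows "int q dvd int b - int a"
proof -
  define z where "z = \<lfloor>real b * (of_int p / real q)\<rfloor> - \<lfloor>real a * (of_int p / real q)\<rfloor>"
  have "real b * (of_int p / real q) - real a * (of_int p / real q) = of_int z"
    using assms(3) by (simp add: frac_def z_def)
  then have "real_of_int ((int b - int a) * p) = real_of_int (int q * z)"
    using assms(1) by (simp add: field_simps)
  then have "int q dvd (int b - int a) * p" by (simp only: of_int_eq_iff) simp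
  with assms(2) show ?thesis
    by (metis coprime_commute coprime_dvd_mult_left_iff)
qed

lemma ternary_period_rat_pos:
  fixes p :: int and q :: nat
  assumes "q > 0"
  shows "ternary_period (of_int p / real q) > 0"
  using ternary_period_spec(1)[OF ternary_digits_eventually_periodic[OF assms]] .

lemma denominator_dvd_three_pow_period:
  fixes p :: int and q :: nat
  assumes "q > 0" "coprime p (int q)"
  shows "\<exists>N. q dvd 3 ^ N * (3 ^ ternary_period (of_int p / real q) - 1)"
proof -
  define P where "P = ternary_period (of_int p / real q)"
  obtain N where "frac (3 ^ N * (of_int p / real q)) = frac (3 ^ (N + P) * (of_int p / real q))"
    using ternary_period_spec(2)[OF ternary_digits_eventually_periodic[OF assms(1)]]
    unfolding P_def by blast
  then have "int q dvd int (3 ^ (N + P)) - int (3 ^ N)"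
    using denominator_dvd_if_frac_mult_eq[OF assms, of "3 ^ N" "3 ^ (N + P)"] by simp
  moreover have "int (3 ^ (N + P)) - int (3 ^ N) = int (3 ^ N * (3 ^ P - 1))"
    by (simp add: power_add right_diff_distrib of_nat_diff)
  ultimately show ?thesis unfolding P_def by (metis int_dvd_int_iff)
qed

lemma dvd_prime_power_mult_split:
  fixes r q M :: nat
  assumes "prime r" "q > 0" "q dvd r ^ N * M"
  shows "\<exists>a d. q = r ^ a * d \<and> d dvd M"
proof -
  have "q \<noteq> 0" "\<not> is_unit r" using assms(1,2) by (auto simp: not_prime_unit)
  then obtain d where d: "q = r ^ multiplicity r q * d" "\<not> r dvd d"
    by (rule multiplicity_decompose')
  have "coprime r d" using assms(1) d(2) by (rule prime_imp_coprime)
  then have "coprime d (r ^ N)" by (simp add: coprime_commute)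
  moreover have "d dvd r ^ N * M" using assms(3) d(1) by (metis dvd_mult_right)
  ultimately have "d dvd M" by (simp add: coprime_dvd_mult_right_iff)
  with d(1) show ?thesis by blast
qed

lemma ternary_sum_bounds:
  fixes a :: "nat \<Rightarrow> nat"
  assumes "\<And>i. a i \<le> 2"
  shows "(\<Sum>i<n. real (a i) / 3 ^ Suc i) \<le> (\<Sum>i. real (a i) / 3 ^ Suc i)"
    and "(\<Sum>i. real (a i) / 3 ^ Suc i) \<le> (\<Sum>i<n. real (a i) / 3 ^ Suc i) + 1 / 3 ^ n"
proof -
  define f where "f = (\<lambda>i. real (a i) / 3 ^ Suc i)"
  define g where "g = (\<lambda>i. (1 / 3 ^ n) * ((2 / 3) * (1 / 3 :: real) ^ i))"
  have f_le_g: "f (i + n) \<le> g i" for i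
  proof -
    have "f (i + n) \<le> 2 / 3 ^ Suc (i + n)"
      unfolding f_def using assms[of "i + n"] by (intro divide_right_mono) auto
    also have "\<dots> = g i" by (simp add: g_def power_add power_one_over)
    finally show ?thesis .
  qed
  have g_sums: "g sums (1 / 3 ^ n)"
    using sums_mult[OF sums_mult[OF geometric_sums[of "1 / 3 :: real"]], of "2 / 3" "1 / 3 ^ n"]
    by (simp add: g_def mult_ac)
  have "summable (\<lambda>i. f (i + n))"
    by (rule summable_comparison_test[OF _ sums_summable[OF g_sums]]) (use f_le_g in \<open>auto simp: f_def\<close>)
  then have "summable f" by (rule summable_iff_shift[THEN iffD1])
  then have "suminf f = (\<Sum>i. f (i + n)) + (\<Sum>i<n. f i)"
    by (rule suminf_split_initial_segment)
  moreover have "0 \<le> (\<Sum>i. f (i + n))"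
    using \<open>summable (\<lambda>i. f (i + n))\<close> by (intro suminf_nonneg) (auto simp: f_def)
  moreover have "(\<Sum>i. f (i + n)) \<le> 1 / 3 ^ n"
    using sums_le[of "\<lambda>i. f (i + n)" g, OF f_le_g summable_sums g_sums]
      \<open>summable (\<lambda>i. f (i + n))\<close> by blast
  ultimately show "(\<Sum>i<n. real (a i) / 3 ^ Suc i) \<le> (\<Sum>i. real (a i) / 3 ^ Suc i)"
    and "(\<Sum>i. real (a i) / 3 ^ Suc i) \<le> (\<Sum>i<n. real (a i) / 3 ^ Suc i) + 1 / 3 ^ n"
    unfolding f_def by linarith+
qed

lemma cantor_set_prefix_bounds:
  assumes "x \<in> cantor_set"
  shows "\<exists>a::nat \<Rightarrow> nat. (\<forall>i. a i \<in> {0, 2}) \<and> (\<Sum>i<n. real (a i) / 3 ^ Suc i) \<le> x \<and>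
    x \<le> (\<Sum>i<n. real (a i) / 3 ^ Suc i) + 1 / 3 ^ n"
proof -
  obtain a where a: "\<And>i. a i \<in> {0, 2}" "x = (\<Sum>i. real (a i) / 3 ^ Suc i)"
    using assms unfolding cantor_set_def by blast
  have "a i \<le> 2" for i using a(1)[of i] by auto
  with ternary_sum_bounds[of a n] a show ?thesis by auto
qed

lemma cantor_set_subset_unit_interval: "cantor_set \<subseteq> {0..1}"
  using cantor_set_prefix_bounds[of _ 0] by auto

lemma finite_cantor_numerators:
  fixes q :: nat
  assumes "q > 0"
  shows "finite {p::int. of_int p / real q \<in> cantor_set}"
proof (rule finite_subset)
  show "{p::int. of_int p / real q \<in> cantor_set} \<subseteq> {0..int q}"
  proof
    fix p assume "p \<in> {p::int. of_int p / real q \<in> cantor_set}"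
    then have "0 \<le> of_int p / real q" "of_int p / real q \<le> 1"
      using cantor_set_subset_unit_interval by auto
    then have "0 \<le> real_of_int p" "real_of_int p \<le> real q"
      using assms by (auto simp: zero_le_divide_iff divide_le_eq)
    then show "p \<in> {0..int q}" by simp
  qed
qed simp

lemma numerators_eq_if_dist_le:
  fixes p1 p2 :: int and q :: nat
  assumes "0 < q" "q < 3 ^ n" "\<bar>of_int p1 / real q - of_int p2 / real q\<bar> \<le> 1 / 3 ^ n"
  shows "p1 = p2"
proof -
  from assms(3) have "\<bar>real_of_int (p1 - p2) / real q\<bar> \<le> 1 / 3 ^ n"
    by (simp only: of_int_diff diff_divide_distrib)
  then have "\<bar>real_of_int (p1 - p2)\<bar> \<le> real q / 3 ^ n"
    using assms(1) by (simp add: abs_divide pos_divide_le_eq)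
  also have "real q < 3 ^ n" using assms(2) by (metis of_nat_less_iff of_nat_numeral of_nat_power)
  then have "real q / 3 ^ n < 1" by simp
  finally show "p1 = p2" by linarith
qed

text \<open>The first \<open>n\<close> Cantor digits of \<open>p/q\<close> determine \<open>p\<close>: they pin \<open>p/q\<close> down to
  within \<open>1/3^n < 1/q\<close>.\<close>
lemma card_cantor_numerators_le:
  fixes q :: nat
  assumes "0 < q" "q < 3 ^ n"
  shows "card {p::int. of_int p / real q \<in> cantor_set} \<le> 2 ^ n"
proof -
  define A where "A = {p::int. of_int p / real q \<in> cantor_set}"
  define prefix_ok where "prefix_ok = (\<lambda>p::int. \<lambda>a::nat \<Rightarrow> nat. (\<forall>i. a i \<in> {0, 2}) \<and>
      (\<Sum>i<n. real (a i) / 3 ^ Suc i) \<le> of_int p / real q \<and>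
      of_int p / real q \<le> (\<Sum>i<n. real (a i) / 3 ^ Suc i) + 1 / 3 ^ n)"
  define digits where "digits = (\<lambda>p. SOME a. prefix_ok p a)"
  have digits: "prefix_ok p (digits p)" if "p \<in> A" for p
  proof -
    have "\<exists>a. prefix_ok p a"
      using cantor_set_prefix_bounds[of _ n] that unfolding A_def prefix_ok_def by blast
    then show ?thesis unfolding digits_def by (rule someI_ex)
  qed
  define prefix where "prefix = (\<lambda>p. map (digits p) [0..<n])"
  have "inj_on prefix A"
  proof (rule inj_onI)
    fix p1 p2 assume p: "p1 \<in> A" "p2 \<in> A" and "prefix p1 = prefix p2"
    then have "(\<Sum>i<n. real (digits p1 i) / 3 ^ Suc i) = (\<Sum>i<n. real (digits p2 i) / 3 ^ Suc i)"
      by (intro sum.cong) (auto simp: prefix_def map_eq_conv)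
    with digits[OF p(1)] digits[OF p(2)] assms show "p1 = p2"
      by (intro numerators_eq_if_dist_le[of q n]) (auto simp: prefix_ok_def)
  qed
  moreover have "prefix ` A \<subseteq> {xs. set xs \<subseteq> {0, 2} \<and> length xs = n}"
  proof (rule image_subsetI)
    fix p assume "p \<in> A"
    then have "set (prefix p) \<subseteq> {0, 2}"
      using digits[of p] by (simp add: prefix_def prefix_ok_def image_subset_iff del: insert_iff)
    then show "prefix p \<in> {xs. set xs \<subseteq> {0, 2} \<and> length xs = n}"
      by (simp add: prefix_def)
  qed
  ultimately have "card A \<le> card {xs. set xs \<subseteq> {0, 2::nat} \<and> length xs = n}"
    by (rule card_inj_on_le) (auto intro: finite_lists_length_eq)
  also have "\<dots> = 2 ^ n" by (subst card_lists_length_eq) (auto simp: numeral_2_eq_2)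
  finally show ?thesis unfolding A_def .
qed

lemma card_le_card_snd_image_mult:
  fixes S :: "('a \<times> 'b) set"
  assumes "finite (snd ` S)"
    and "\<And>y. y \<in> snd ` S \<Longrightarrow> finite {x. (x, y) \<in> S} \<and> card {x. (x, y) \<in> S} \<le> b"
  shows "card S \<le> card (snd ` S) * b"
proof -
  have "S = (\<Union>y\<in>snd ` S. (\<lambda>x. (x, y)) ` {x. (x, y) \<in> S})" by force
  then have "card S = card (\<Union>y\<in>snd ` S. (\<lambda>x. (x, y)) ` {x. (x, y) \<in> S})"
    by (rule arg_cong)
  also have "\<dots> \<le> (\<Sum>y\<in>snd ` S. card ((\<lambda>x. (x, y)) ` {x. (x, y) \<in> S}))"
    by (rule card_UN_le[OF assms(1)])
  also have "\<dots> \<le> (\<Sum>y\<in>snd ` S. b)"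
    using assms(2) card_image_le order_trans by (intro sum_mono) blast
  finally show ?thesis by simp
qed

lemma S_set_denominator_bounds:
  assumes "(p, q) \<in> S_set K n"
  shows "0 < q" and "q < 3 ^ n"
proof -
  have "(0::nat) < 3 ^ (n - 1)" by simp
  also have "3 ^ (n - 1) \<le> q" using assms by (simp add: S_set_def)
  finally show "0 < q" .
  show "q < 3 ^ n" using assms by (simp add: S_set_def)
qed

lemma S_set_denominator_decomposition:
  assumes "(p, q) \<in> S_set K n"
  defines "L \<equiv> nat \<lceil>\<bar>K\<bar> * real n * ln 3\<rceil>"
  shows "\<exists>a<n. \<exists>P\<in>{1..L}. \<exists>d. q = 3 ^ a * d \<and> d dvd 3 ^ P - 1"
proof -
  have q_pos: "0 < q" and q_upper: "q < 3 ^ n" by (rule S_set_denominator_bounds[OF assms(1)])+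
  have coprime: "coprime p (int q)"
    and period: "real (ternary_period (of_int p / real q)) \<le> K * ln (real q)"
    using assms(1) by (auto simp: S_set_def)
  define P where "P = ternary_period (of_int p / real q)"
  obtain N where "q dvd 3 ^ N * (3 ^ P - 1)"
    using denominator_dvd_three_pow_period[OF q_pos coprime] unfolding P_def by blast
  moreover have "prime (3::nat)" by simp
  ultimately obtain a d where ad: "q = 3 ^ a * d" "d dvd 3 ^ P - 1"
    using dvd_prime_power_mult_split q_pos by blast
  have "(3::nat) ^ a \<le> q" using ad(1) q_pos by simp
  with q_upper have "(3::nat) ^ a < 3 ^ n" by linarith
  then have "a < n" by simp
  have "real q \<le> 3 ^ n" using q_upper by (metis less_imp_le of_nat_le_iff of_nat_numeral of_nat_power)
  then have "ln (real q) \<le> real n * ln 3" using q_pos by (simp add: ln_realpow[symmetric])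
  moreover have "0 \<le> ln (real q)" using q_pos by simp
  ultimately have "K * ln (real q) \<le> \<bar>K\<bar> * (real n * ln 3)"
    by (meson abs_ge_self abs_ge_zero mult_mono order_trans)
  with period have "P \<le> L" unfolding P_def L_def by (simp add: mult.assoc) linarith
  moreover have "1 \<le> P" using ternary_period_rat_pos[OF q_pos, of p] by (simp add: P_def)
  ultimately have "P \<in> {1..L}" by simp
  with \<open>a < n\<close> ad show ?thesis by blast
qed

lemma three_pow_minus_one_pos: "1 \<le> P \<Longrightarrow> 0 < (3::nat) ^ P - 1"
  using power_increasing[of 1 P "3::nat"] by simp

lemma finite_divisors_three_pow_minus_one: "finite (\<Union>P\<in>{1..L}. {d::nat. d dvd 3 ^ P - 1})"
  using three_pow_minus_one_pos by (intro finite_UN_I finite_divisors_nat) auto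

lemma card_divisors_three_pow_minus_one_le:
  fixes C \<delta> :: real
  assumes "\<delta> \<ge> 0" and divisor_bound: "\<And>m::nat. m > 0 \<Longrightarrow> real (card {d. d dvd m}) \<le> C * real m powr \<delta>"
  shows "real (card (\<Union>P\<in>{1..L}. {d::nat. d dvd 3 ^ P - 1})) \<le> real L * C * 3 powr (real L * \<delta>)"
proof -
  have "card (\<Union>P\<in>{1..L}. {d::nat. d dvd 3 ^ P - 1}) \<le> (\<Sum>P\<in>{1..L}. card {d::nat. d dvd 3 ^ P - 1})"
    by (rule card_UN_le) simp
  then have "real (card (\<Union>P\<in>{1..L}. {d::nat. d dvd 3 ^ P - 1}))
      \<le> (\<Sum>P\<in>{1..L}. real (card {d::nat. d dvd 3 ^ P - 1}))"
    by (metis of_nat_le_iff of_nat_sum)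
  also have "\<dots> \<le> (\<Sum>P\<in>{1..L}. C * 3 powr (real L * \<delta>))"
  proof (rule sum_mono)
    fix P assume P: "P \<in> {1..L}"
    have "C \<ge> 0" using divisor_bound[of 1] by simp
    have "(3::nat) ^ P \<le> 3 ^ L" using P by (intro power_increasing) auto
    then have "real ((3::nat) ^ P - 1) \<le> real ((3::nat) ^ L)" by linarith
    also have "\<dots> = 3 powr real L" by (simp add: powr_realpow)
    finally have "real ((3::nat) ^ P - 1) powr \<delta> \<le> (3 powr real L) powr \<delta>"
      using assms(1) by (intro powr_mono2) auto
    then have "C * real ((3::nat) ^ P - 1) powr \<delta> \<le> C * 3 powr (real L * \<delta>)"
      using \<open>C \<ge> 0\<close> by (simp add: powr_powr mult_left_mono)
    with divisor_bound[OF three_pow_minus_one_pos] P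
    show "real (card {d::nat. d dvd 3 ^ P - 1}) \<le> C * 3 powr (real L * \<delta>)" by force
  qed
  finally show ?thesis by simp
qed

lemma card_S_set_le:
  fixes K C \<delta> :: real and n :: nat
  assumes "\<delta> \<ge> 0" and "\<And>m::nat. m > 0 \<Longrightarrow> real (card {d. d dvd m}) \<le> C * real m powr \<delta>"
  defines "L \<equiv> nat \<lceil>\<bar>K\<bar> * real n * ln 3\<rceil>"
  shows "real (card (S_set K n)) \<le> real n * (real L * C * 3 powr (real L * \<delta>)) * 2 ^ n"
proof -
  define S where "S = S_set K n"
  define D where "D = (\<Union>P\<in>{1..L}. {d::nat. d dvd 3 ^ P - 1})"
  let ?Q = "(\<lambda>(a, d). 3 ^ a * d) ` ({..<n} \<times> D)"
  have fin: "finite ({..<n} \<times> D)"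
    unfolding D_def by (rule finite_cartesian_product[OF finite_lessThan finite_divisors_three_pow_minus_one])
  have denominators: "snd ` S \<subseteq> ?Q"
    using S_set_denominator_decomposition unfolding S_def D_def L_def by fastforce
  have "finite (snd ` S)" using fin by (intro finite_subset[OF denominators]) simp
  have "card (snd ` S) \<le> card ?Q" using fin by (intro card_mono[OF _ denominators]) simp
  also have "\<dots> \<le> card ({..<n} \<times> D)" by (rule card_image_le[OF fin])
  finally have card_denominators: "card (snd ` S) \<le> n * card D" by (simp add: card_cartesian_product)
  have "card S \<le> card (snd ` S) * 2 ^ n"
  proof (rule card_le_card_snd_image_mult[OF \<open>finite (snd ` S)\<close>])
    fix q assume "q \<in> snd ` S"
    then have q: "0 < q" "q < 3 ^ n" using S_set_denominator_bounds by (auto simp: S_def)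
    have "{p. (p, q) \<in> S} \<subseteq> {p. of_int p / real q \<in> cantor_set}" by (auto simp: S_def S_set_def)
    then show "finite {p. (p, q) \<in> S} \<and> card {p. (p, q) \<in> S} \<le> 2 ^ n"
      using finite_cantor_numerators[OF q(1)] card_cantor_numerators_le[OF q]
      by (meson card_mono finite_subset order_trans)
  qed
  then have "real (card S) \<le> real (card (snd ` S)) * 2 ^ n"
    by (metis of_nat_le_iff of_nat_mult of_nat_numeral of_nat_power)
  also have "\<dots> \<le> real n * real (card D) * 2 ^ n"
    using card_denominators by (simp flip: of_nat_mult)
  also have "\<dots> \<le> real n * (real L * C * 3 powr (real L * \<delta>)) * 2 ^ n"
    using card_divisors_three_pow_minus_one_le[OF assms(1,2), of L]
    by (intro mult_right_mono mult_left_mono) (simp_all add: D_def)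
  finally show ?thesis unfolding S_def .
qed

lemma card_S_set_le_two_powr:
  fixes K \<epsilon> C :: real and n :: nat
  defines "A \<equiv> \<bar>K\<bar> * ln 3 + 1"
  assumes "\<epsilon> \<ge> 0"
    and divisor_bound: "\<And>m::nat. m > 0 \<Longrightarrow>
      real (card {d. d dvd m}) \<le> C * real m powr (\<epsilon> * ln 2 / (2 * A * ln 3))"
  shows "real (card (S_set K n))
    \<le> C * A * 2 powr (\<epsilon> / 2) * (real n * (real n + 1) * 2 powr (real n * (1 + \<epsilon> / 2)))"
proof -
  define \<delta> where "\<delta> = \<epsilon> * ln 2 / (2 * A * ln 3)"
  define L where "L = nat \<lceil>\<bar>K\<bar> * real n * ln 3\<rceil>"
  have "0 \<le> \<bar>K\<bar> * ln 3" by simp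
  then have "A > 0" unfolding A_def by linarith
  have "C \<ge> 0" using divisor_bound[of 1] by simp
  have "real L = of_int \<lceil>\<bar>K\<bar> * real n * ln 3\<rceil>" by (simp add: L_def)
  also have "\<dots> \<le> \<bar>K\<bar> * ln 3 * real n + 1"
    using ceiling_correct[of "\<bar>K\<bar> * real n * ln 3"] by (simp add: ac_simps)
  also have "\<dots> \<le> A * (real n + 1)"
    using \<open>0 \<le> \<bar>K\<bar> * ln 3\<close> by (simp add: A_def algebra_simps)
  finally have L_le: "real L \<le> A * (real n + 1)" .
  have "3 powr (real L * \<delta>) \<le> 3 powr (A * (real n + 1) * \<delta>)"
    using L_le \<open>A > 0\<close> assms(2) by (intro powr_mono mult_right_mono) (auto simp: \<delta>_def)
  also have "\<dots> = 2 powr (\<epsilon> * (real n + 1) / 2)"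
    using \<open>A > 0\<close> by (simp add: powr_def \<delta>_def)
  finally have three_powr_le: "3 powr (real L * \<delta>) \<le> 2 powr (\<epsilon> * (real n + 1) / 2)" .
  have "real (card (S_set K n)) \<le> real n * (real L * C * 3 powr (real L * \<delta>)) * 2 ^ n"
    using card_S_set_le[of \<delta> C K n] divisor_bound \<open>A > 0\<close> assms(2)
    unfolding L_def \<delta>_def by simp
  also have "\<dots> \<le> real n * (A * (real n + 1) * C * 2 powr (\<epsilon> * (real n + 1) / 2)) * 2 ^ n"
    using L_le three_powr_le \<open>C \<ge> 0\<close> by (intro mult_right_mono mult_left_mono mult_mono) auto
  also have "2 powr (\<epsilon> * (real n + 1) / 2) * 2 ^ n = 2 powr (\<epsilon> / 2) * 2 powr (real n * (1 + \<epsilon> / 2))"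
    by (simp add: powr_realpow[symmetric] powr_add[symmetric] field_simps)
  then have "real n * (A * (real n + 1) * C * 2 powr (\<epsilon> * (real n + 1) / 2)) * 2 ^ n
      = C * A * 2 powr (\<epsilon> / 2) * (real n * (real n + 1) * 2 powr (real n * (1 + \<epsilon> / 2)))"
    by (simp add: ac_simps)
  finally show ?thesis .
qed

theorem theorem5p2:
  fixes K :: real and \<epsilon>1 :: real
  assumes "\<epsilon>1 > 0"
  shows "(\<lambda>n. real (card (S_set K n))) \<in> O(\<lambda>n. 2 powr (real n * (1 + \<epsilon>1)))"
proof -
  define A where "A = \<bar>K\<bar> * ln 3 + 1"
  have "\<epsilon>1 * ln 2 / (2 * A * ln 3) > 0"
    using assms by (simp add: A_def add_nonneg_pos)
  then obtain C where C: "\<forall>m::nat. m > 0 \<longrightarrow>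
      real (card {d. d dvd m}) \<le> C * real m powr (\<epsilon>1 * ln 2 / (2 * A * ln 3))"
    using card_divisors_le_powr by blast
  define h where "h = (\<lambda>n. real n * (real n + 1) * 2 powr (real n * (1 + \<epsilon>1 / 2)))"
  have "real (card (S_set K n)) \<le> C * A * 2 powr (\<epsilon>1 / 2) * h n" for n
    unfolding A_def h_def by (rule card_S_set_le_two_powr) (use C assms in \<open>auto simp: A_def\<close>)
  then have "(\<lambda>n. real (card (S_set K n))) \<in> O(h)"
    by (intro bigoI[of _ "C * A * 2 powr (\<epsilon>1 / 2)"] always_eventually) (simp add: h_def)
  also have "h \<in> O(\<lambda>n. 2 powr (real n * (1 + \<epsilon>1)))"
    unfolding h_def using assms by real_asymp
  finally show ?thesis .
qed

end
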